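(* Let $g:\Sigma^n\to\Sigma$ be an $n$-quasigroup, write $\Sigma=\{a,b,c,d\}$, and let $k$ be the first canonical parameter of the double-MDS-code $S=\{\bar x\in\Sigma^n:g(\bar x)\in\{a,b\}\}$. (a) If $1<k<n$, then $g$ is reducible. (b) If $k=n$, then $g$ is semilinear.
   Context: Let $\Sigma=\{0,1,2,3\}$, $[n]=\{1,\ldots,n\}$. An $i$-line of $\Sigma^n$ is a set of the four words that agree in all coordinates except the $i$th; a line is an $i$-line for some $i$. An $(n,2)_4$ MDS code is a set meeting every line in exactly one element. A double-code is a set meeting every line in $0$ or $2$ elements; a double-MDS-code is a set meeting every line in exactly $2$ elements; a double-code is complementable if contained in a double-MDS-code, and prime if complementable, nonempty and not partitionable into two or more nonempty double-codes. An $n$-quasigroup is a map $g:\Sigma^n\to\Sigma$ such that, for each $i$ and each fixing of the other arguments, $x_i\mapsto g(\bar x)$ is a bijection of $\Sigma$. $\chi_S$ denotes the characteristic function, $\oplus$ addition mod 2, and for $K=\{i_1<\cdots<i_m\}\subseteq[n]$, $\bar x_K=(x_{i_1},\ldots,x_{i_m})$. Canonical parameters: every double-MDS-code $S\subseteq\Sigma^n$ has a unique representation $\chi_S(\bar x)=\bigoplus_{j=1}^k\chi_{S_j}(\bar x_{K_j})\oplus\sigma_0$ with $k\in[n]$, $\{K_1,\ldots,K_k\}$ a partition of $[n]$ into nonempty sets, $S_j$ prime double-MDS-codes containing $\bar 0$, $\sigma_0\in\{0,1\}$. An $n$-quasigroup $g$ is reducible if there exist $k'$ with $2\le k'\le n-1$,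 a partition $\{L_1,\ldots,L_{k'}\}$ of $[n]$ into nonempty sets, a $k'$-quasigroup $f_0$ and $|L_j|$-quasigroups $f_j$ with $g(\bar x)=f_0(f_1(\bar x_{L_1}),\ldots,f_{k'}(\bar x_{L_{k'}}))$ (i.e. $g$ is a superposition of quasigroups of arity less than $n$). A double-MDS-code $D\subseteq\Sigma^m$ is linear if $\chi_D(y_1,\ldots,y_m)=\chi_1(y_1)\oplus\cdots\oplus\chi_m(y_m)$ for some $\chi_i:\Sigma\to\{0,1\}$; an MDS code is semilinear if contained in a linear double-MDS-code; an $n$-quasigroup $g$ is semilinear if the MDS code $\{(\bar x,g(\bar x)):\bar x\in\Sigma^n\}\subseteq\Sigma^{n+1}$ is semilinear. *)

theory Defs
  imports Main
begin

text \<open>Conventions: \<Sigma> = {0,1,2,3} (naturals < 4); words of \<Sigma>^n are lists of length n;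
  coordinate i of [n] corresponds to list index i-1.  For K a set of indices,
  nths x K is the subword x_K (entries in increasing index order).\<close>

definition words :: "nat \<Rightarrow> nat list set" where
  "words n = {x. length x = n \<and> set x \<subseteq> {0..<4}}"

definition line :: "nat list \<Rightarrow> nat \<Rightarrow> nat list set" where
  "line x i = {x[i := a] | a. a < 4}"

definition MDS_code :: "nat \<Rightarrow> nat list set \<Rightarrow> bool" where
  "MDS_code n C \<longleftrightarrow> C \<subseteq> words n \<and>
     (\<forall>x\<in>words n. \<forall>i<n. card (C \<inter> line x i) = 1)"

definition double_code :: "nat \<Rightarrow> nat list set \<Rightarrow> bool" where
  "double_code n D \<longleftrightarrow> D \<subseteq> words n \<and>
     (\<forall>x\<in>words n. \<forall>i<n. card (D \<inter> line x i) \<in> {0, 2})"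

definition double_MDS_code :: "nat \<Rightarrow> nat list set \<Rightarrow> bool" where
  "double_MDS_code n D \<longleftrightarrow> D \<subseteq> words n \<and>
     (\<forall>x\<in>words n. \<forall>i<n. card (D \<inter> line x i) = 2)"

definition complementable :: "nat \<Rightarrow> nat list set \<Rightarrow> bool" where
  "complementable n D \<longleftrightarrow> double_code n D \<and> (\<exists>E. double_MDS_code n E \<and> D \<subseteq> E)"

definition prime_code :: "nat \<Rightarrow> nat list set \<Rightarrow> bool" where
  "prime_code n D \<longleftrightarrow> complementable n D \<and> D \<noteq> {} \<and>
     \<not> (\<exists>P. (\<forall>A\<in>P. A \<noteq> {} \<and> double_code n A) \<and> pairwise disjnt P \<and>
            \<Union>P = D \<and> 2 \<le> card P)"

definition quasigroup :: "nat \<Rightarrow> (nat list \<Rightarrow> nat) \<Rightarrow> bool" where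
  "quasigroup n g \<longleftrightarrow> (\<forall>x\<in>words n. g x < 4) \<and>
     (\<forall>x\<in>words n. \<forall>i<n. bij_betw (\<lambda>a. g (x[i := a])) {0..<4} {0..<4})"

definition index_partition :: "nat \<Rightarrow> nat \<Rightarrow> (nat \<Rightarrow> nat set) \<Rightarrow> bool" where
  "index_partition n k K \<longleftrightarrow> (\<forall>j<k. K j \<noteq> {}) \<and>
     (\<forall>j<k. \<forall>j'<k. j \<noteq> j' \<longrightarrow> K j \<inter> K j' = {}) \<and>
     (\<Union>j<k. K j) = {..<n}"

definition canonical_first_param :: "nat \<Rightarrow> nat list set \<Rightarrow> nat \<Rightarrow> bool" where
  "canonical_first_param n S k \<longleftrightarrow> double_MDS_code n S \<and> 1 \<le> k \<and> k \<le> n \<and>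
     (\<exists>K SS (\<sigma>0::nat). index_partition n k K \<and>
        (\<forall>j<k. prime_code (card (K j)) (SS j) \<and> double_MDS_code (card (K j)) (SS j) \<and>
               replicate (card (K j)) 0 \<in> SS j) \<and>
        \<sigma>0 \<le> 1 \<and>
        (\<forall>x\<in>words n. (if x \<in> S then 1 else 0) =
            ((\<Sum>j<k. if nths x (K j) \<in> SS j then 1 else 0) + \<sigma>0) mod (2::nat)))"

definition reducible :: "nat \<Rightarrow> (nat list \<Rightarrow> nat) \<Rightarrow> bool" where
  "reducible n g \<longleftrightarrow> (\<exists>k' L f0 f. 2 \<le> k' \<and> k' \<le> n - 1 \<and> index_partition n k' L \<and>
     quasigroup k' f0 \<and> (\<forall>j<k'. quasigroup (card (L j)) (f j)) \<and>
     (\<forall>x\<in>words n. g x = f0 (map (\<lambda>j. f j (nths x (L j))) [0..<k'])))"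

definition linear_double_MDS :: "nat \<Rightarrow> nat list set \<Rightarrow> bool" where
  "linear_double_MDS m D \<longleftrightarrow> double_MDS_code m D \<and>
     (\<exists>\<chi> :: nat \<Rightarrow> nat \<Rightarrow> bool. \<forall>y\<in>words m.
        (y \<in> D) \<longleftrightarrow> odd (card {i. i < m \<and> \<chi> i (y ! i)}))"

definition semilinear_code :: "nat \<Rightarrow> nat list set \<Rightarrow> bool" where
  "semilinear_code m M \<longleftrightarrow> MDS_code m M \<and> (\<exists>D. linear_double_MDS m D \<and> M \<subseteq> D)"

definition semilinear :: "nat \<Rightarrow> (nat list \<Rightarrow> nat) \<Rightarrow> bool" where
  "semilinear n g \<longleftrightarrow> semilinear_code (n + 1) {x @ [g x] | x. x \<in> words n}"

end

theory Submission
  imports Defs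
begin

text \<open>Fix a block K of the canonical decomposition, so that g x \<in> {a, b} iff
  (x_K \<in> S_K) xor Q(x), where Q depends only on the coordinates outside K. For each choice X
  of the outer coordinates, z \<mapsto> g(X with z on K) is a quasigroup whose {a, b}-preimage is
  S_K or its complement. Both are indecomposable double codes (S_K is prime, and the complement of
  an indecomposable double-MDS code is indecomposable), and on each of them the quasigroup is a
  proper 2-colouring; proper 2-colourings of an indecomposable code agree up to renaming. Hence the
  partition of the subwords z induced by g does not depend on X, and g factors through
  h(x_K) = g(0 with x_K on K). This is a nontrivial decomposition as soon as 2 \<le> |K| < n, which
  some block satisfies when 1 < k < n. If k = n, all blocks are singletons, so the preimage of
  {a, b} is a parity of coordinatewise predicates and
  {(x, t). g x \<in> {a, b} \<longleftrightarrow> t \<in> {a, b}} is a linear double-MDS code containing the graph of g.\<close>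

lemma length_words: "x \<in> words n \<Longrightarrow> length x = n"
  unfolding words_def by simp

lemma nth_words_less: "x \<in> words n \<Longrightarrow> i < n \<Longrightarrow> x ! i < 4"
  unfolding words_def using nth_mem by fastforce

lemma words_update: "x \<in> words n \<Longrightarrow> a < 4 \<Longrightarrow> x[i := a] \<in> words n"
  unfolding words_def by (auto dest: set_update_subset_insert[THEN subsetD])

lemma card_Int_line:
  assumes "x \<in> words n" "i < n"
  shows "card (C \<inter> line x i) = card {a. a < 4 \<and> x[i := a] \<in> C}"
proof -
  have "C \<inter> line x i = (\<lambda>a. x[i := a]) ` {a. a < 4 \<and> x[i := a] \<in> C}"
    unfolding line_def by auto
  moreover have "inj_on (\<lambda>a. x[i := a]) {a. a < 4 \<and> x[i := a] \<in> C}"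
    using assms length_words[OF assms(1)] by (intro inj_onI) (metis nth_list_update_eq)
  ultimately show ?thesis by (simp add: card_image)
qed

lemma double_code_iff: "double_code n D \<longleftrightarrow> D \<subseteq> words n \<and>
    (\<forall>x\<in>words n. \<forall>i<n. card {a. a < 4 \<and> x[i := a] \<in> D} \<in> {0, 2})"
  unfolding double_code_def using card_Int_line by auto

lemma double_MDS_code_iff: "double_MDS_code n D \<longleftrightarrow> D \<subseteq> words n \<and>
    (\<forall>x\<in>words n. \<forall>i<n. card {a. a < 4 \<and> x[i := a] \<in> D} = 2)"
  unfolding double_MDS_code_def using card_Int_line by auto

lemma MDS_code_iff: "MDS_code n C \<longleftrightarrow> C \<subseteq> words n \<and>
    (\<forall>x\<in>words n. \<forall>i<n. card {a. a < 4 \<and> x[i := a] \<in> C} = 1)"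
  unfolding MDS_code_def using card_Int_line by auto

lemma double_MDS_code_imp_double_code: "double_MDS_code n D \<Longrightarrow> double_code n D"
  unfolding double_MDS_code_iff double_code_iff by auto

lemma card_complement_less4: "card {a. a < (4::nat) \<and> \<not> P a} = 4 - card {a. a < (4::nat) \<and> P a}"
proof -
  have "{a. a < (4::nat) \<and> \<not> P a} = {..<4} - {a. a < 4 \<and> P a}" by auto
  then show ?thesis by (simp add: card_Diff_subset subset_eq)
qed

lemma double_MDS_code_complement:
  assumes "double_MDS_code n D"
  shows "double_MDS_code n (words n - D)"
  unfolding double_MDS_code_iff
proof (intro conjI ballI allI impI)
  fix x i assume x: "x \<in> words n" and i: "i < n"
  have "{a. a < 4 \<and> x[i := a] \<in> words n - D} = {a. a < 4 \<and> x[i := a] \<notin> D}"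
    using words_update[OF x] by auto
  then show "card {a. a < 4 \<and> x[i := a] \<in> words n - D} = 2"
    using card_complement_less4[of "\<lambda>a. x[i := a] \<in> D"] assms x i
    unfolding double_MDS_code_iff by simp
qed simp

lemma card_2_elements_eq:
  assumes "card V = 2" "u \<in> V" "v \<in> V" "u \<noteq> v" "w \<in> V"
  shows "w = u \<or> w = v"
  using assms by (auto simp: card_2_iff)

lemma double_MDS_code_line_elements:
  assumes "double_MDS_code n C" "x \<in> words n" "i < n"
    and "x[i := u] \<in> C" "x[i := v] \<in> C" "u \<noteq> v" "u < 4" "v < 4"
    and "x[i := w] \<in> C" "w < 4"
  shows "w = u \<or> w = v"
  using assms unfolding double_MDS_code_iff
  by (intro card_2_elements_eq[of "{a. a < 4 \<and> x[i := a] \<in> C}"]) auto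

lemma double_MDS_code_line_other_point:
  assumes "double_MDS_code n C" "x \<in> words n" "i < n"
  obtains u where "u < 4" "u \<noteq> c" "x[i := u] \<in> C"
proof -
  have "card {a. a < 4 \<and> x[i := a] \<in> C} = 2"
    using assms unfolding double_MDS_code_iff by simp
  then obtain u v where uv: "{a. a < 4 \<and> x[i := a] \<in> C} = {u, v}" "u \<noteq> v"
    by (auto simp: card_2_iff)
  then have "u < 4 \<and> x[i := u] \<in> C" "v < 4 \<and> x[i := v] \<in> C" by blast+
  then show ?thesis using that uv(2) by metis
qed

lemma double_code_subset_line_closed:
  assumes C: "double_MDS_code n C" and B: "double_code n B" "B \<subseteq> C"
    and x: "x \<in> words n" "i < n"
    and u: "x[i := u] \<in> B" "u < 4" and v: "x[i := v] \<in> C" "v < 4"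
  shows "x[i := v] \<in> B"
proof -
  have "card {a. a < 4 \<and> x[i := a] \<in> B} \<noteq> 0"
    using u by (auto simp: card_eq_0_iff)
  moreover have "card {a. a < 4 \<and> x[i := a] \<in> B} \<in> {0, 2}"
    using B x unfolding double_code_iff by blast
  ultimately have "card {a. a < 4 \<and> x[i := a] \<in> B} = 2"
    by (simp only: insert_iff empty_iff) blast
  moreover have "card {a. a < 4 \<and> x[i := a] \<in> C} = 2"
    using C x unfolding double_MDS_code_iff by auto
  moreover have "{a. a < 4 \<and> x[i := a] \<in> B} \<subseteq> {a. a < 4 \<and> x[i := a] \<in> C}"
    using B by auto
  ultimately have "{a. a < 4 \<and> x[i := a] \<in> B} = {a. a < 4 \<and> x[i := a] \<in> C}"
    by (intro card_subset_eq) auto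
  then show ?thesis using v by blast
qed

lemma double_code_split:
  assumes D: "double_code n D" and AD: "A \<subseteq> D"
    and closed: "\<And>x i u v. x \<in> words n \<Longrightarrow> i < n \<Longrightarrow> u < 4 \<Longrightarrow> v < 4 \<Longrightarrow>
      x[i := u] \<in> D \<Longrightarrow> x[i := v] \<in> D \<Longrightarrow> x[i := u] \<in> A \<Longrightarrow> x[i := v] \<in> A"
  shows "double_code n A \<and> double_code n (D - A)"
proof -
  have "card {a. a < 4 \<and> x[i := a] \<in> A} \<in> {0, 2} \<and> card {a. a < 4 \<and> x[i := a] \<in> D - A} \<in> {0, 2}"
    if x: "x \<in> words n" "i < n" for x i
  proof -
    let ?A = "{a. a < 4 \<and> x[i := a] \<in> A}" and ?D = "{a. a < 4 \<and> x[i := a] \<in> D}"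
    have "?A = ?D" if u: "u \<in> ?A" for u
    proof
      show "?A \<subseteq> ?D" using AD by auto
      show "?D \<subseteq> ?A"
      proof
        fix v assume "v \<in> ?D"
        moreover have "u < 4" "x[i := u] \<in> A" using u by auto
        ultimately show "v \<in> ?A" using closed[OF x, of u v] AD by auto
      qed
    qed
    then have "?A = {} \<or> ?A = ?D" by blast
    moreover have "{a. a < 4 \<and> x[i := a] \<in> D - A} = ?D - ?A" by auto
    moreover have "card ?D \<in> {0, 2}" using D x unfolding double_code_iff by auto
    ultimately show ?thesis by (elim disjE) simp_all
  qed
  moreover have "A \<subseteq> words n" "D - A \<subseteq> words n" using AD D unfolding double_code_iff by auto
  ultimately show ?thesis unfolding double_code_iff by blast
qed


section \<open>Overwriting a subword\<close>

definition positions :: "nat set \<Rightarrow> nat \<Rightarrow> nat list" where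
  "positions K n = filter (\<lambda>p. p \<in> K) [0..<n]"

definition rank :: "nat set \<Rightarrow> nat \<Rightarrow> nat" where
  "rank K p = length (positions K p)"

definition put_nths :: "nat list \<Rightarrow> nat set \<Rightarrow> nat list \<Rightarrow> nat list" where
  "put_nths x K y = map (\<lambda>p. if p \<in> K then y ! rank K p else x ! p) [0..<length x]"

lemma set_positions: "set (positions K n) = K \<inter> {..<n}"
  unfolding positions_def by auto

lemma distinct_positions: "distinct (positions K n)"
  unfolding positions_def by simp

lemma length_positions: "K \<subseteq> {..<n} \<Longrightarrow> length (positions K n) = card K"
  using distinct_card[OF distinct_positions, of K n] set_positions[of K n] by (simp add: Int_absorb2)

lemma nth_positions: "j < length (positions K n) \<Longrightarrow> positions K n ! j \<in> K \<and> positions K n ! j < n"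
  using set_positions[of K n] nth_mem[of j "positions K n"] by blast

lemma upt_split_at: "p < n \<Longrightarrow> [0..<n] = [0..<p] @ p # [Suc p..<n]"
  using upt_add_eq_append[of 0 p "n - p"] upt_conv_Cons[of p n] by simp

lemma positions_rank:
  assumes "p \<in> K" "p < n"
  shows "rank K p < length (positions K n) \<and> positions K n ! rank K p = p"
proof -
  have "positions K n = positions K p @ p # filter (\<lambda>q. q \<in> K) [Suc p..<n]"
    using upt_split_at[OF assms(2)] assms(1) unfolding positions_def by simp
  then show ?thesis unfolding rank_def by (simp add: nth_append)
qed

lemma rank_nth_positions: "j < length (positions K n) \<Longrightarrow> rank K (positions K n ! j) = j"
  using positions_rank[of "positions K n ! j" K n] nth_positions[of j K n]
    nth_eq_iff_index_eq[OF distinct_positions] by metis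

lemma nths_eq_map_positions: "length x = n \<Longrightarrow> nths x K = map ((!) x) (positions K n)"
proof (induction x arbitrary: n rule: rev_induct)
  case (snoc a x)
  have "map ((!) (x @ [a])) (positions K (length x)) = map ((!) x) (positions K (length x))"
    unfolding positions_def by (auto simp: nth_append)
  then show ?case using snoc by (auto simp: nths_append positions_def)
qed (simp add: positions_def)

lemma nths_singleton_nth: "p < length x \<Longrightarrow> nths x {p} = [x ! p]"
proof -
  assume p: "p < length x"
  then have "positions {p} (length x) = [p]"
    unfolding positions_def upt_split_at[OF p] by (simp add: filter_empty_conv)
  then show ?thesis using nths_eq_map_positions[of x "length x" "{p}"] by simp
qed

lemma nths_words: "x \<in> words n \<Longrightarrow> K \<subseteq> {..<n} \<Longrightarrow> nths x K \<in> words (card K)"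
  using nths_eq_map_positions[of x n K] length_positions[of K n] set_nths_subset[of x K]
  unfolding words_def by auto

lemma length_put_nths [simp]: "length (put_nths x K y) = length x"
  unfolding put_nths_def by simp

lemma nth_put_nths: "p < length x \<Longrightarrow> put_nths x K y ! p = (if p \<in> K then y ! rank K p else x ! p)"
  unfolding put_nths_def by simp

lemma nths_put_nths:
  assumes "length y = length (positions K (length x))"
  shows "nths (put_nths x K y) K = y"
proof (rule nth_equalityI)
  fix j assume "j < length (nths (put_nths x K y) K)"
  then have j: "j < length (positions K (length x))"
    using nths_eq_map_positions[of "put_nths x K y" "length x" K] by simp
  then show "nths (put_nths x K y) K ! j = y ! j"
    using nth_positions[OF j] rank_nth_positions[OF j]
    by (simp add: nths_eq_map_positions nth_put_nths)
qed (simp add: nths_eq_map_positions assms)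

lemma put_nths_nths: "put_nths x K (nths x K) = x"
proof (rule nth_equalityI)
  fix p assume "p < length (put_nths x K (nths x K))"
  then have p: "p < length x" by simp
  then show "put_nths x K (nths x K) ! p = x ! p"
    using positions_rank[of p K "length x"]
    by (auto simp: nth_put_nths nths_eq_map_positions)
qed simp

lemma nths_put_nths_disjoint: "K' \<inter> K = {} \<Longrightarrow> nths (put_nths x K y) K' = nths x K'"
  by (auto simp: nths_eq_map_positions nth_put_nths set_positions dest: nth_positions)

lemma nth_put_nths_nths:
  assumes "length x' = length x" "p \<in> K" "p < length x"
  shows "put_nths x' K (nths x K) ! p = x ! p"
  using positions_rank[OF assms(2,3)] assms
  by (simp add: nth_put_nths nths_eq_map_positions[of x "length x"])

lemma put_nths_words:
  assumes x: "x \<in> words n" and y: "y \<in> words (card K)" and K: "K \<subseteq> {..<n}"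
  shows "put_nths x K y \<in> words n"
proof -
  have "put_nths x K y ! p < 4" if p: "p < n" for p
  proof (cases "p \<in> K")
    case True
    then have "rank K p < card K"
      using positions_rank[OF True p] length_positions[OF K] by simp
    then show ?thesis using True p x y by (simp add: nth_put_nths length_words nth_words_less)
  qed (use p x in \<open>simp add: nth_put_nths length_words nth_words_less\<close>)
  then show ?thesis using x unfolding words_def by (auto simp: in_set_conv_nth)
qed

lemma put_nths_update_in:
  assumes "j < length (positions K (length x))" "j < length y"
  shows "put_nths x K (y[j := a]) = (put_nths x K y)[positions K (length x) ! j := a]"
proof (rule nth_equalityI)
  fix p assume "p < length (put_nths x K (y[j := a]))"
  then have p: "p < length x" by simp
  have "rank K p = j \<longleftrightarrow> p = positions K (length x) ! j" if "p \<in> K"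
    using positions_rank[OF that p] rank_nth_positions[OF assms(1)] by metis
  then show "put_nths x K (y[j := a]) ! p = (put_nths x K y)[positions K (length x) ! j := a] ! p"
    using p nth_positions[OF assms(1)] assms(2) by (auto simp: nth_put_nths nth_list_update)
qed simp

lemma put_nths_update_out:
  "p \<notin> K \<Longrightarrow> put_nths (x[p := a]) K y = (put_nths x K y)[p := a]"
  by (cases "p < length x") (auto intro!: nth_equalityI simp: nth_put_nths nth_list_update)

lemma put_nths_cong:
  assumes "length x = length x'" "\<And>p. p < length x \<Longrightarrow> p \<notin> K \<Longrightarrow> x ! p = x' ! p"
  shows "put_nths x K y = put_nths x' K y"
  by (rule nth_equalityI) (use assms in \<open>auto simp: nth_put_nths\<close>)


section \<open>Indecomposable double codes\<close>

definition indecomposable :: "nat \<Rightarrow> nat list set \<Rightarrow> bool" where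
  "indecomposable n D \<longleftrightarrow>
     (\<forall>A. A \<subseteq> D \<longrightarrow> double_code n A \<longrightarrow> double_code n (D - A) \<longrightarrow> A \<noteq> {} \<longrightarrow> A = D)"

lemma indecomposableD:
  "indecomposable n D \<Longrightarrow> A \<subseteq> D \<Longrightarrow> double_code n A \<Longrightarrow> double_code n (D - A) \<Longrightarrow> A \<noteq> {} \<Longrightarrow> A = D"
  unfolding indecomposable_def by blast

lemma prime_code_imp_indecomposable:
  assumes "prime_code n D"
  shows "indecomposable n D"
  unfolding indecomposable_def
proof (intro allI impI)
  fix A assume A: "A \<subseteq> D" "double_code n A" "double_code n (D - A)" "A \<noteq> {}"
  show "A = D"
  proof (rule ccontr)
    assume "A \<noteq> D"
    then have "D - A \<noteq> {}" "A \<noteq> D - A" using A by blast+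
    then have "(\<forall>X\<in>{A, D - A}. X \<noteq> {} \<and> double_code n X) \<and> pairwise disjnt {A, D - A} \<and>
        \<Union>{A, D - A} = D \<and> 2 \<le> card {A, D - A}"
      using A by (auto simp: pairwise_def disjnt_def)
    then show False using assms unfolding prime_code_def by blast
  qed
qed

lemma indecomposable_colourings_agree:
  assumes D: "double_code n D" "indecomposable n D"
    and V: "c ` D \<subseteq> V" "card V = 2" and V': "c' ` D \<subseteq> V'" "card V' = 2"
    and proper: "\<And>x i u v. x \<in> words n \<Longrightarrow> i < n \<Longrightarrow> x[i := u] \<in> D \<Longrightarrow> x[i := v] \<in> D \<Longrightarrow> u \<noteq> v \<Longrightarrow>
      c (x[i := u]) \<noteq> c (x[i := v]) \<and> c' (x[i := u]) \<noteq> c' (x[i := v])"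
    and y: "y0 \<in> D" "y \<in> D"
  shows "c y0 = c y \<longleftrightarrow> c' y0 = c' y"
proof -
  define A where "A = {z \<in> D. (c y0 = c z) = (c' y0 = c' z)}"
  have "double_code n A \<and> double_code n (D - A)"
  proof (rule double_code_split[OF D(1)])
    fix x i u v assume x: "x \<in> words n" "i < n" and uv: "u < 4" "v < 4"
      and D_uv: "x[i := u] \<in> D" "x[i := v] \<in> D" and "x[i := u] \<in> A"
    show "x[i := v] \<in> A"
    proof (cases "u = v")
      case False
      \<comment> \<open>a proper colouring with two colours flips the colour along every edge\<close>
      then have ne: "c (x[i := v]) \<noteq> c (x[i := u])" "c' (x[i := v]) \<noteq> c' (x[i := u])"
        using proper[OF x D_uv] by auto
      have "c y0 = c (x[i := v]) \<or> c y0 = c (x[i := u])"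
        using V(1) D_uv y(1) by (intro card_2_elements_eq[OF V(2) _ _ ne(1)]) blast+
      moreover have "c' y0 = c' (x[i := v]) \<or> c' y0 = c' (x[i := u])"
        using V'(1) D_uv y(1) by (intro card_2_elements_eq[OF V'(2) _ _ ne(2)]) blast+
      ultimately have "(c y0 = c (x[i := v])) \<longleftrightarrow> \<not> (c y0 = c (x[i := u]))"
        "(c' y0 = c' (x[i := v])) \<longleftrightarrow> \<not> (c' y0 = c' (x[i := u]))"
        using ne by auto
      then show ?thesis using \<open>x[i := u] \<in> A\<close> D_uv(2) unfolding A_def by simp
    qed (use \<open>x[i := u] \<in> A\<close> in simp)
  qed (auto simp: A_def)
  moreover have "y0 \<in> A" using y unfolding A_def by simp
  moreover have "A \<subseteq> D" unfolding A_def by blast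
  ultimately have "A = D" using indecomposableD[OF D(2)] by blast
  then show ?thesis using y(2) unfolding A_def by blast
qed

definition line_meets :: "nat list set \<Rightarrow> nat list \<Rightarrow> nat \<Rightarrow> bool" where
  "line_meets A x i \<longleftrightarrow> (\<exists>a<4. x[i := a] \<in> A)"

lemma line_meets_update: "line_meets A (x[i := c]) i = line_meets A x i"
  unfolding line_meets_def by simp

context
  fixes n :: nat and N A :: "nat list set"
  assumes N: "double_MDS_code n N" and A: "double_code n A" "A \<subseteq> N"
begin

lemma line_meets_iff_mem:
  assumes e: "e \<in> N" and i: "i < n"
  shows "line_meets A e i \<longleftrightarrow> e \<in> A"
proof -
  have ew: "e \<in> words n" using e N unfolding double_MDS_code_def by blast
  show ?thesis
  proof
    assume "line_meets A e i"
    then obtain a where a: "e[i := a] \<in> A" "a < 4" unfolding line_meets_def by blast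
    have "e[i := e ! i] \<in> A"
      using double_code_subset_line_closed[OF N A ew i a, of "e ! i"] e nth_words_less[OF ew i] by simp
    then show "e \<in> A" by simp
  next
    assume "e \<in> A"
    then have "e[i := e ! i] \<in> A" by simp
    then show "line_meets A e i" unfolding line_meets_def using nth_words_less[OF ew i] by blast
  qed
qed

lemma line_meets_update_iff:
  assumes x: "x \<in> words n" "j < n" and uv: "u < 4" "v < 4" "x[j := u] \<in> N" "x[j := v] \<in> N"
    and i: "i < n"
  shows "line_meets A (x[j := u]) i \<longleftrightarrow> line_meets A (x[j := v]) i"
proof -
  have "x[j := u] \<in> A \<Longrightarrow> x[j := v] \<in> A" "x[j := v] \<in> A \<Longrightarrow> x[j := u] \<in> A"
    using double_code_subset_line_closed[OF N A x] uv by (simp_all only: simp_thms)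
  then show ?thesis by (simp only: line_meets_iff_mem[OF uv(3) i] line_meets_iff_mem[OF uv(4) i]) blast
qed

lemma line_meets_not_isolated:
  assumes x: "x \<in> words n" and ij: "i < n" "j < n" "i \<noteq> j" and c: "c < 4"
  obtains u where "u < 4" "u \<noteq> c" "line_meets A (x[j := u]) i = line_meets A (x[j := c]) i"
proof -
  have xc: "x[j := c] \<in> words n" using words_update[OF x c] .
  \<comment> \<open>step along the i-line to a point q of N, where the A-membership of the two points of N
    on the j-line through q agree\<close>
  obtain w where w: "w < 4" "(x[j := c])[i := w] \<in> N"
    using double_MDS_code_line_other_point[OF N xc ij(1)] by blast
  define q where "q = (x[j := c])[i := w]"
  have q: "q \<in> words n" "q \<in> N"
    unfolding q_def using words_update[OF xc w(1)] w(2) by simp_all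
  have "q ! j = c" unfolding q_def using ij length_words[OF x] by simp
  then have qj: "q[j := c] = q" by (metis list_update_id)
  obtain u where u: "u < 4" "u \<noteq> c" "q[j := u] \<in> N"
    using double_MDS_code_line_other_point[OF N q(1) ij(2)] by blast
  have "q[j := c] \<in> N" using q(2) qj by simp
  from line_meets_update_iff[OF q(1) ij(2) u(1) c u(3) this ij(1)]
  have "line_meets A (q[j := u]) i = line_meets A q i" using qj by simp
  moreover have "q[j := u] = (x[j := u])[i := w]"
    unfolding q_def by (simp add: list_update_swap[OF ij(3)])
  ultimately have "line_meets A (x[j := u]) i = line_meets A (x[j := c]) i"
    unfolding q_def by (simp only: line_meets_update)
  then show ?thesis using that u by blast
qed

lemma line_meets_along_complement:
  assumes x: "x \<in> words n" "x \<notin> N" and ij: "i < n" "j < n" "i \<noteq> j"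
    and b: "b < 4" "x[j := b] \<notin> N"
  shows "line_meets A (x[j := b]) i = line_meets A x i"
proof (rule ccontr)
  define P where "P c = line_meets A (x[j := c]) i" for c
  have xj: "x ! j < 4" "x[j := x ! j] = x" using nth_words_less[OF x(1) ij(2)] by simp_all
  assume "line_meets A (x[j := b]) i \<noteq> line_meets A x i"
  then have Pb: "P b \<noteq> P (x ! j)" unfolding P_def using xj(2) by simp
  have PN: "P w = P u" if "w < 4" "u < 4" "x[j := w] \<in> N" "x[j := u] \<in> N" for w u
    using line_meets_update_iff[OF x(1) ij(2) that ij(1)] unfolding P_def .
  have off_N: "w = x ! j \<or> w = b" if "w < 4" "x[j := w] \<notin> N" for w
    using double_MDS_code_line_elements[OF double_MDS_code_complement[OF N] x(1) ij(2),
        of "x ! j" b w] x b xj Pb that words_update[OF x(1)] by auto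
  obtain u where u: "u < 4" "x[j := u] \<in> N"
    using double_MDS_code_line_other_point[OF N x(1) ij(2)] by blast
  define d where "d = (if P (x ! j) \<noteq> P u then x ! j else b)"
  have d: "d = x ! j \<or> d = b" "P d \<noteq> P u" "d < 4" using Pb xj(1) b(1) unfolding d_def by auto
  \<comment> \<open>d would be the only value of its colour on the j-line through x\<close>
  have "P w \<noteq> P d" if "w < 4" "w \<noteq> d" for w
  proof (cases "x[j := w] \<in> N")
    case True
    then show ?thesis using PN[OF that(1) u(1) True u(2)] d(2) by simp
  next
    case False
    then show ?thesis using off_N[OF that(1) False] d(1) that(2) Pb by auto
  qed
  moreover obtain w where "w < 4" "w \<noteq> d" "P w = P d"
    unfolding P_def by (rule line_meets_not_isolated[OF x(1) ij d(3)])
  ultimately show False by blast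
qed

lemma line_meets_split:
  assumes i: "i < n"
  shows "double_code n {x \<in> words n - N. line_meets A x i} \<and>
    double_code n ((words n - N) - {x \<in> words n - N. line_meets A x i})"
proof (rule double_code_split)
  show "double_code n (words n - N)"
    by (rule double_MDS_code_imp_double_code[OF double_MDS_code_complement[OF N]])
next
  fix x j u v assume x: "x \<in> words n" "j < n" and uv: "u < 4" "v < 4"
    and D_uv: "x[j := u] \<in> words n - N" "x[j := v] \<in> words n - N"
    and "x[j := u] \<in> {x \<in> words n - N. line_meets A x i}"
  moreover have "line_meets A (x[j := v]) i = line_meets A (x[j := u]) i"
  proof (cases "i = j")
    case False
    have "(x[j := u])[j := v] \<notin> N" using D_uv(2) by simp
    with line_meets_along_complement[of "x[j := u]" i j v] D_uv(1) i x(2) False uv(2)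
    show ?thesis by simp
  qed (simp add: line_meets_update)
  ultimately show "x[j := v] \<in> {x \<in> words n - N. line_meets A x i}" by simp
qed blast

lemma line_meets_witness:
  assumes e: "e \<in> N" and i: "i < n"
  obtains x where "x \<in> words n - N" "line_meets A x i \<longleftrightarrow> e \<in> A"
proof -
  have "e \<in> words n" using e N unfolding double_MDS_code_def by blast
  then obtain u where u: "u < 4" "e[i := u] \<in> words n - N"
    using double_MDS_code_line_other_point[OF double_MDS_code_complement[OF N] _ i] by blast
  have "line_meets A (e[i := u]) i \<longleftrightarrow> e \<in> A"
    using line_meets_iff_mem[OF e i] by (simp add: line_meets_update)
  then show ?thesis using that u(2) by blast
qed

end

text \<open>A nontrivial splitting A of the complement of D is transported to D: the part of D whose
  0-lines meet A splits D nontrivially.\<close>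

lemma indecomposable_complement:
  assumes D: "double_MDS_code n D" "indecomposable n D" and n: "0 < n"
  shows "indecomposable n (words n - D)"
  unfolding indecomposable_def
proof (intro allI impI)
  define N where "N = words n - D"
  have N: "double_MDS_code n N" using double_MDS_code_complement[OF D(1)] unfolding N_def .
  have D_eq: "words n - N = D" using D(1) unfolding N_def double_MDS_code_def by blast
  fix A assume A: "A \<subseteq> words n - D" "double_code n A" "double_code n (words n - D - A)" "A \<noteq> {}"
  then have AN: "A \<subseteq> N" unfolding N_def by simp
  define D1 where "D1 = {x \<in> D. line_meets A x 0}"
  have split: "double_code n D1" "double_code n (D - D1)"
    using line_meets_split[OF N A(2) AN n] unfolding D1_def D_eq by simp_all
  show "A = words n - D"
  proof (rule ccontr)
    assume "A \<noteq> words n - D"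
    then obtain e0 where e0: "e0 \<in> N" "e0 \<notin> A" using A(1) unfolding N_def by blast
    obtain x0 where "x0 \<in> D" "\<not> line_meets A x0 0"
      using line_meets_witness[OF N A(2) AN e0(1) n] e0(2) unfolding D_eq by blast
    then have "x0 \<in> D - D1" unfolding D1_def by simp
    obtain e1 where e1: "e1 \<in> A" using A(4) by blast
    obtain x1 where "x1 \<in> D" "line_meets A x1 0"
      using line_meets_witness[OF N A(2) AN _ n] e1 AN unfolding D_eq by blast
    then have "D1 = D"
      using indecomposableD[OF D(2) _ split] unfolding D1_def by blast
    then show False using \<open>x0 \<in> D - D1\<close> by simp
  qed
qed


lemma quasigroup_less4: "quasigroup n g \<Longrightarrow> x \<in> words n \<Longrightarrow> g x < 4"
  unfolding quasigroup_def by blast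

lemma quasigroup_update_neq:
  assumes g: "quasigroup n g" and x: "x \<in> words n" "i < n"
    and uv: "x[i := u] \<in> words n" "x[i := v] \<in> words n" "u \<noteq> v"
  shows "g (x[i := u]) \<noteq> g (x[i := v])"
proof -
  have "x[i := u] ! i < 4" "x[i := v] ! i < 4" using nth_words_less uv(1,2) x(2) by blast+
  then have "u \<in> {0..<4}" "v \<in> {0..<4}" using x length_words[OF x(1)] by simp_all
  moreover have "inj_on (\<lambda>a. g (x[i := a])) {0..<4}"
    using g x unfolding quasigroup_def by (blast dest: bij_betw_imp_inj_on)
  ultimately show ?thesis using uv(3) by (auto dest: inj_onD)
qed

lemma quasigroup_put_nths:
  assumes g: "quasigroup n g" and x: "x \<in> words n" and K: "K \<subseteq> {..<n}"
  shows "quasigroup (card K) (\<lambda>y. g (put_nths x K y))"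
  unfolding quasigroup_def
proof (intro conjI ballI allI impI)
  fix y assume "y \<in> words (card K)"
  then show "g (put_nths x K y) < 4" using quasigroup_less4[OF g put_nths_words[OF x _ K]] by blast
next
  fix y i assume y: "y \<in> words (card K)" and i: "i < card K"
  have i': "i < length (positions K (length x))" "i < length y"
    using i length_positions[OF K] length_words[OF x] length_words[OF y] by simp_all
  then have p: "positions K (length x) ! i < n" using nth_positions length_words[OF x] by metis
  have "bij_betw (\<lambda>a. g ((put_nths x K y)[positions K (length x) ! i := a])) {0..<4} {0..<4}"
    using g put_nths_words[OF x y K] p unfolding quasigroup_def by blast
  then show "bij_betw (\<lambda>a. g (put_nths x K (y[i := a]))) {0..<4} {0..<4}"
    by (simp add: put_nths_update_in[OF i'])
qed

lemma quasigroup_image_subset: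
  assumes f: "quasigroup n f" "\<And>z. z \<in> words n \<Longrightarrow> f z \<in> C \<longleftrightarrow> (z \<in> \<phi> \<longleftrightarrow> e)"
    and D: "D \<subseteq> words n" "\<And>z. z \<in> D \<Longrightarrow> z \<in> \<phi> \<longleftrightarrow> s"
  shows "f ` D \<subseteq> (if s \<longleftrightarrow> e then C else {..<4} - C)"
proof
  fix w assume "w \<in> f ` D"
  then obtain z where z: "z \<in> D" "w = f z" by blast
  then have "f z < 4" "f z \<in> C \<longleftrightarrow> (s \<longleftrightarrow> e)"
    using quasigroup_less4[OF f(1)] f(2) D by auto
  then show "w \<in> (if s \<longleftrightarrow> e then C else {..<4} - C)" using z(2) by auto
qed

text \<open>On each of the indecomposable codes \<phi> and words n - \<phi>, both quasigroups are proper
  colourings with the two colours of C or of its complement; such colourings agree up to renaming.\<close>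

lemma quasigroup_kernels_eq:
  fixes h h' :: "nat list \<Rightarrow> nat"
  assumes h: "quasigroup n h" "quasigroup n h'" and n: "0 < n"
    and \<phi>: "double_MDS_code n \<phi>" "indecomposable n \<phi>"
    and C: "card C = 2" "C \<subseteq> {..<4}"
    and pre: "\<And>z. z \<in> words n \<Longrightarrow> h z \<in> C \<longleftrightarrow> (z \<in> \<phi> \<longleftrightarrow> \<epsilon>)"
      "\<And>z. z \<in> words n \<Longrightarrow> h' z \<in> C \<longleftrightarrow> (z \<in> \<phi> \<longleftrightarrow> \<epsilon>')"
    and y: "y \<in> words n" "y' \<in> words n"
  shows "h y = h y' \<longleftrightarrow> h' y = h' y'"
proof (cases "y \<in> \<phi> \<longleftrightarrow> y' \<in> \<phi>")
  case True
  define D where "D = (if y \<in> \<phi> then \<phi> else words n - \<phi>)"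
  have D: "double_code n D" "indecomposable n D"
    using double_MDS_code_imp_double_code[OF \<phi>(1)]
      double_MDS_code_imp_double_code[OF double_MDS_code_complement[OF \<phi>(1)]]
      \<phi>(2) indecomposable_complement[OF \<phi> n] unfolding D_def by simp_all
  have D_words: "D \<subseteq> words n" using \<phi>(1) unfolding D_def double_MDS_code_def by auto
  have side: "z \<in> \<phi> \<longleftrightarrow> y \<in> \<phi>" if "z \<in> D" for z using that unfolding D_def by (auto split: if_splits)
  have card_V: "card (if P then C else {..<4} - C) = 2" for P
    using C by (simp add: card_Diff_subset finite_subset)
  have "h (x[i := u]) \<noteq> h (x[i := v]) \<and> h' (x[i := u]) \<noteq> h' (x[i := v])"
    if "x \<in> words n" "i < n" "x[i := u] \<in> D" "x[i := v] \<in> D" "u \<noteq> v" for x i u v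
    using quasigroup_update_neq[OF h(1) that(1,2)] quasigroup_update_neq[OF h(2) that(1,2)]
      that(3-5) D_words by blast
  moreover have "y \<in> D" "y' \<in> D" using y True unfolding D_def by auto
  ultimately show ?thesis
    using indecomposable_colourings_agree[OF D
        quasigroup_image_subset[OF h(1) pre(1) D_words side] card_V
        quasigroup_image_subset[OF h(2) pre(2) D_words side] card_V] by blast
next
  case False
  then have "h y \<in> C \<longleftrightarrow> h y' \<notin> C" "h' y \<in> C \<longleftrightarrow> h' y' \<notin> C"
    using pre[OF y(1)] pre[OF y(2)] by blast+
  then show ?thesis by auto
qed


lemma index_partition_subset: "index_partition n k K \<Longrightarrow> j < k \<Longrightarrow> K j \<subseteq> {..<n}"
  unfolding index_partition_def by blast

lemma index_partition_disjoint:
  "index_partition n k K \<Longrightarrow> j < k \<Longrightarrow> j' < k \<Longrightarrow> j \<noteq> j' \<Longrightarrow> K j \<inter> K j' = {}"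
  unfolding index_partition_def by blast

lemma index_partition_card_pos: "index_partition n k K \<Longrightarrow> j < k \<Longrightarrow> 0 < card (K j)"
  using index_partition_subset[of n k K j] finite_subset
  unfolding index_partition_def by (auto simp: card_gt_0_iff)

lemma index_partition_sum_card:
  assumes "index_partition n k K"
  shows "(\<Sum>j<k. card (K j)) = n"
proof -
  have "(\<Sum>j<k. card (K j)) = card (\<Union>j<k. K j)"
    using index_partition_subset[OF assms] index_partition_disjoint[OF assms]
    by (intro card_UN_disjoint[symmetric]) (auto intro: finite_subset)
  also have "\<dots> = n" using assms unfolding index_partition_def by simp
  finally show ?thesis .
qed

lemma index_partition_card_less:
  assumes K: "index_partition n k K" and "1 < k" "j < k"
  shows "card (K j) < n"
proof -
  obtain j' where j': "j' < k" "j' \<noteq> j"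
    using assms(2,3) by (cases "j = 0") (auto intro: that[of 0] that[of 1])
  have "(\<Sum>i<k. card (K i)) = card (K j) + (\<Sum>i\<in>{..<k} - {j}. card (K i))"
    using assms(3) by (simp add: sum.remove)
  moreover have "card (K j') \<le> (\<Sum>i\<in>{..<k} - {j}. card (K i))"
    using j' by (intro member_le_sum) auto
  ultimately show ?thesis
    using index_partition_sum_card[OF K] index_partition_card_pos[OF K j'(1)] by linarith
qed

lemma index_partition_large_block:
  assumes K: "index_partition n k K" and "k < n"
  shows "\<exists>j<k. 2 \<le> card (K j)"
proof (rule ccontr)
  assume small: "\<not> (\<exists>j<k. 2 \<le> card (K j))"
  have "card (K j) = 1" if "j < k" for j
  proof -
    have "card (K j) < 2" using small that by (simp add: not_le)
    then show ?thesis using index_partition_card_pos[OF K that] by simp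
  qed
  then have "(\<Sum>j<k. card (K j)) = k" by simp
  then show False using index_partition_sum_card[OF K] \<open>k < n\<close> by simp
qed

lemma index_partition_singletons:
  assumes K: "index_partition n n K"
  obtains \<pi> where "bij_betw \<pi> {..<n} {..<n}" "\<And>j. j < n \<Longrightarrow> K j = {\<pi> j}"
proof -
  have "card (K j) = 1" if j: "j < n" for j
  proof (rule ccontr)
    assume "card (K j) \<noteq> 1"
    then have "2 \<le> card (K j)" using index_partition_card_pos[OF K j] by simp
    moreover have "(\<Sum>i<n. card (K i)) = card (K j) + (\<Sum>i\<in>{..<n} - {j}. card (K i))"
      using j by (simp add: sum.remove)
    moreover have "(\<Sum>i\<in>{..<n} - {j}. 1) \<le> (\<Sum>i\<in>{..<n} - {j}. card (K i))"
      using index_partition_card_pos[OF K] by (intro sum_mono) (simp add: Suc_le_eq)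
    ultimately show False using index_partition_sum_card[OF K] j by simp
  qed
  then have K1: "K j = {the_elem (K j)}" if "j < n" for j
    using that card_1_singletonE the_elem_eq by metis
  have "inj_on (\<lambda>j. the_elem (K j)) {..<n}"
  proof (rule inj_onI)
    fix i j assume ij: "i \<in> {..<n}" "j \<in> {..<n}" "the_elem (K i) = the_elem (K j)"
    then have "K i \<inter> K j \<noteq> {}" using K1[of i] K1[of j] by force
    then show "i = j" using index_partition_disjoint[OF K] ij by blast
  qed
  moreover have "(\<lambda>j. the_elem (K j)) ` {..<n} = {..<n}"
  proof -
    have "(\<Union>j<n. K j) = (\<lambda>j. the_elem (K j)) ` {..<n}" using K1 by auto
    then show ?thesis using K unfolding index_partition_def by simp
  qed
  ultimately show ?thesis using that K1 unfolding bij_betw_def by blast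
qed

section \<open>Reducibility\<close>

lemma replicate_zero_words: "replicate n 0 \<in> words n"
  unfolding words_def by (simp add: set_replicate_conv_if)

lemma words_SucE:
  assumes "w \<in> words (Suc m)"
  obtains c t where "w = c # t" "c < 4" "t \<in> words m"
  using assms unfolding words_def by (cases w) auto

lemma quasigroup_hd: "quasigroup 1 hd"
  unfolding quasigroup_def
proof (intro conjI ballI allI impI)
  fix x i assume "x \<in> words 1" "i < (1::nat)"
  then obtain c where "x = [c]" "i = 0" unfolding words_def by (auto simp: length_Suc_conv)
  then show "bij_betw (\<lambda>a. hd (x[i := a])) {0..<4} {0..<4}" by (simp add: bij_betw_def)
qed (auto simp: words_def length_Suc_conv)

lemma quasigroup_surj:
  assumes "quasigroup m h" "0 < m" "v < 4"
  obtains y where "y \<in> words m" "h y = v"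
proof -
  have "bij_betw (\<lambda>a. h ((replicate m 0)[0 := a])) {0..<4} {0..<4}"
    using assms(1,2) replicate_zero_words unfolding quasigroup_def by blast
  then have "v \<in> (\<lambda>a. h ((replicate m 0)[0 := a])) ` {0..<4}"
    using assms(3) unfolding bij_betw_def by simp
  then obtain a where "a < 4" "h ((replicate m 0)[0 := a]) = v" by auto
  then show ?thesis using that words_update[OF replicate_zero_words] by blast
qed

locale separable_block =
  fixes n :: nat and g :: "nat list \<Rightarrow> nat" and K :: "nat set"
  assumes quasigroup: "quasigroup n g" and block: "K \<subseteq> {..<n}" "K \<noteq> {}"
    and kernel_independent: "\<And>x x' y y'. x \<in> words n \<Longrightarrow> x' \<in> words n \<Longrightarrow>
      y \<in> words (card K) \<Longrightarrow> y' \<in> words (card K) \<Longrightarrow>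
      g (put_nths x K y) = g (put_nths x K y') \<longleftrightarrow> g (put_nths x' K y) = g (put_nths x' K y')"
begin

definition inner :: "nat list \<Rightarrow> nat" where
  "inner y = g (put_nths (replicate n 0) K y)"

definition rest :: "nat set" where
  "rest = {..<n} - K"

definition inner_inv :: "nat \<Rightarrow> nat list" where
  "inner_inv v = (SOME y. y \<in> words (card K) \<and> inner y = v)"

text \<open>By kernel independence, g is determined by the inner value together with the coordinates
  outside K; the outer quasigroup feeds an arbitrary inner preimage back into g.\<close>

definition outer :: "nat list \<Rightarrow> nat" where
  "outer w = g (put_nths (put_nths (replicate n 0) rest (tl w)) K (inner_inv (hd w)))"

definition blocks :: "nat \<Rightarrow> nat set" where
  "blocks j = (if j = 0 then K else {positions rest n ! (j - 1)})"

definition components :: "nat \<Rightarrow> nat list \<Rightarrow> nat" where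
  "components j = (if j = 0 then inner else hd)"

lemma card_K_pos: "0 < card K"
  using block finite_subset by (auto simp: card_gt_0_iff)

lemma rest_subset: "rest \<subseteq> {..<n}"
  unfolding rest_def by blast

lemma length_positions_rest: "length (positions rest n) = card rest"
  using length_positions[OF rest_subset] .

lemma card_rest: "card rest = n - card K"
  unfolding rest_def using block by (simp add: card_Diff_subset finite_subset)

lemma inner_quasigroup: "quasigroup (card K) inner"
  using quasigroup_put_nths[OF quasigroup replicate_zero_words block(1)] unfolding inner_def .

lemma inner_inv_spec:
  assumes "v < 4"
  shows "inner_inv v \<in> words (card K) \<and> inner (inner_inv v) = v"
proof -
  obtain y where "y \<in> words (card K)" "inner y = v"
    by (rule quasigroup_surj[OF inner_quasigroup card_K_pos assms])
  then show ?thesis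
    unfolding inner_inv_def by (intro someI_ex[of "\<lambda>y. y \<in> words (card K) \<and> inner y = v"]) blast
qed

lemma g_put_nths_eq_iff:
  assumes "x \<in> words n" "y \<in> words (card K)" "y' \<in> words (card K)"
  shows "g (put_nths x K y) = g (put_nths x K y') \<longleftrightarrow> inner y = inner y'"
  using kernel_independent[OF assms(1) replicate_zero_words assms(2,3)] unfolding inner_def .

lemma put_nths_rest_words: "t \<in> words (card rest) \<Longrightarrow> put_nths (replicate n 0) rest t \<in> words n"
  using put_nths_words[OF replicate_zero_words _ rest_subset] .

lemma outer_quasigroup: "quasigroup (Suc (card rest)) outer"
  unfolding quasigroup_def
proof (intro conjI ballI allI impI)
  fix w assume "w \<in> words (Suc (card rest))"
  then obtain c t where w: "w = c # t" "c < 4" "t \<in> words (card rest)" by (rule words_SucE)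
  define X where "X = put_nths (replicate n 0) rest t"
  have X: "X \<in> words n" unfolding X_def using put_nths_rest_words[OF w(3)] .
  have outer_upd: "outer (w[0 := a]) = g (put_nths X K (inner_inv a))" for a
    unfolding outer_def X_def w(1) by simp
  show "outer w < 4"
    using outer_upd[of c] w quasigroup_less4[OF quasigroup put_nths_words[OF X _ block(1)]] inner_inv_spec
    by (metis list_update_code(2))
  fix i assume i: "i < Suc (card rest)"
  show "bij_betw (\<lambda>a. outer (w[i := a])) {0..<4} {0..<4}"
  proof (cases i)
    case 0
    have "inj_on (\<lambda>a. outer (w[0 := a])) {0..<4}"
      using g_put_nths_eq_iff[OF X] inner_inv_spec unfolding outer_upd by (intro inj_onI) force
    moreover have "(\<lambda>a. outer (w[0 := a])) ` {0..<4} \<subseteq> {0..<4}"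
      using quasigroup_less4[OF quasigroup put_nths_words[OF X _ block(1)]] inner_inv_spec
      unfolding outer_upd by auto
    ultimately show ?thesis
      unfolding 0 bij_betw_def using endo_inj_surj[of "{0..<4::nat}"] by blast
  next
    case (Suc j)
    let ?p = "positions rest n ! j"
    have j: "j < length (positions rest n)" "j < length t"
      using i Suc length_positions_rest length_words[OF w(3)] by simp_all
    have p: "?p \<notin> K" "?p < n" using nth_positions[OF j(1)] unfolding rest_def by auto
    have "outer (w[i := a]) = g ((put_nths X K (inner_inv c))[?p := a])" for a
      using put_nths_update_in[of j rest "replicate n 0" t a] j put_nths_update_out[OF p(1)]
      unfolding outer_def X_def w(1) Suc by simp
    moreover have "bij_betw (\<lambda>a. g ((put_nths X K (inner_inv c))[?p := a])) {0..<4} {0..<4}"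
      using quasigroup put_nths_words[OF X _ block(1)] inner_inv_spec[OF w(2)] p(2)
      unfolding quasigroup_def by blast
    ultimately show ?thesis by simp
  qed
qed

lemma blocks_partition: "index_partition n (Suc (card rest)) blocks"
  unfolding index_partition_def
proof (intro conjI allI impI)
  fix j assume "j < Suc (card rest)"
  show "blocks j \<noteq> {}" unfolding blocks_def using block(2) by simp
next
  fix j j' assume j: "j < Suc (card rest)" "j' < Suc (card rest)" "j \<noteq> j'"
  have mem: "positions rest n ! (i - 1) \<in> rest" if "i < Suc (card rest)" "i \<noteq> 0" for i
    using nth_positions[of "i - 1" rest n] that length_positions_rest by simp
  have "positions rest n ! (j - 1) \<noteq> positions rest n ! (j' - 1)" if "j \<noteq> 0" "j' \<noteq> 0"
    using that j nth_eq_iff_index_eq[OF distinct_positions, of "j - 1" rest n "j' - 1"]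
      length_positions_rest by auto
  moreover have "K \<inter> rest = {}" unfolding rest_def by blast
  ultimately show "blocks j \<inter> blocks j' = {}"
    unfolding blocks_def using mem[OF j(1)] mem[OF j(2)] j(3) by (auto simp del: One_nat_def)
next
  have "(\<Union>j<Suc (card rest). blocks j) = blocks 0 \<union> (\<Union>j<card rest. blocks (Suc j))"
    by (simp only: lessThan_Suc_eq_insert_0 UN_insert image_image)
  also have "(\<Union>j<card rest. blocks (Suc j)) = set (positions rest n)"
    unfolding blocks_def length_positions_rest[symmetric] by (auto simp: in_set_conv_nth)
  finally have "(\<Union>j<Suc (card rest). blocks j) = K \<union> rest"
    using rest_subset by (simp add: blocks_def set_positions Int_absorb2)
  then show "(\<Union>j<Suc (card rest). blocks j) = {..<n}" using block(1) unfolding rest_def by blast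
qed

lemma components_quasigroup: "quasigroup (card (blocks j)) (components j)"
  using inner_quasigroup quasigroup_hd unfolding blocks_def components_def by simp

lemma decomposition:
  assumes x: "x \<in> words n"
  shows "g x = outer (map (\<lambda>j. components j (nths x (blocks j))) [0..<Suc (card rest)])"
proof -
  have lx: "length x = n" using length_words[OF x] .
  have "components (Suc j) (nths x (blocks (Suc j))) = x ! (positions rest n ! j)"
    if "j < card rest" for j
    using nth_positions[of j rest n] length_positions_rest that lx
    by (simp add: components_def blocks_def nths_singleton_nth)
  then have "map (\<lambda>j. components (Suc j) (nths x (blocks (Suc j)))) [0..<card rest] =
      map (\<lambda>j. x ! (positions rest n ! j)) [0..<card rest]"
    by simp
  also have "\<dots> = nths x rest"
    unfolding nths_eq_map_positions[OF lx] using length_positions_rest by (intro nth_equalityI) simp_all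
  finally have args: "map (\<lambda>j. components j (nths x (blocks j))) [0..<Suc (card rest)] =
      inner (nths x K) # nths x rest"
    unfolding upt_conv_Cons[OF zero_less_Suc] map_Suc_upt[symmetric]
    by (simp add: components_def blocks_def comp_def)
  have "put_nths (replicate n 0) rest (nths x rest) ! p = x ! p" if "p < n" "p \<notin> K" for p
    using nth_put_nths_nths[of "replicate n 0" x p rest] that lx unfolding rest_def by simp
  then have "put_nths (put_nths (replicate n 0) rest (nths x rest)) K y = put_nths x K y" for y
    by (intro put_nths_cong) (simp_all add: lx)
  then have "outer (inner (nths x K) # nths x rest) = g (put_nths x K (inner_inv (inner (nths x K))))"
    unfolding outer_def by simp
  also have "\<dots> = g (put_nths x K (nths x K))"
  proof -
    have nK: "nths x K \<in> words (card K)" using nths_words[OF x block(1)] .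
    from inner_inv_spec[OF quasigroup_less4[OF inner_quasigroup nK]]
    show ?thesis using g_put_nths_eq_iff[OF x _ nK] by blast
  qed
  finally show ?thesis using args by (simp add: put_nths_nths)
qed

theorem reducible:
  assumes "2 \<le> card K" "card K < n"
  shows "reducible n g"
  unfolding reducible_def
  using assms card_rest blocks_partition outer_quasigroup components_quasigroup decomposition
  by (intro exI[of _ "Suc (card rest)"] exI[of _ blocks] exI[of _ outer] exI[of _ components]) auto

end


section \<open>Semilinearity\<close>

lemma card_bij_betw_preimage:
  assumes "bij_betw f A B" "C \<subseteq> B"
  shows "card {a \<in> A. f a \<in> C} = card C"
proof -
  have "f ` {a \<in> A. f a \<in> C} = C" using assms unfolding bij_betw_def by blast
  moreover have "inj_on f {a \<in> A. f a \<in> C}"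
    using assms(1) unfolding bij_betw_def by (rule inj_on_subset[OF conjunct1]) blast
  ultimately show ?thesis using card_image by fastforce
qed

lemma card_quasigroup_line_preimage:
  assumes "quasigroup n g" "x \<in> words n" "i < n" "C \<subseteq> {..<4}"
  shows "card {a. a < 4 \<and> g (x[i := a]) \<in> C} = card C"
proof -
  have "bij_betw (\<lambda>a. g (x[i := a])) {0..<4} {0..<4}"
    using assms(1-3) unfolding quasigroup_def by blast
  from card_bij_betw_preimage[OF this, of C] assms(4) show ?thesis
    by (simp add: lessThan_atLeast0)
qed

lemma double_MDS_code_quasigroup_preimage:
  assumes g: "quasigroup n g" and C: "card C = 2" "C \<subseteq> {..<4}"
  shows "double_MDS_code n {x \<in> words n. g x \<in> C}"
  unfolding double_MDS_code_iff
proof (intro conjI ballI allI impI)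
  fix x i assume x: "x \<in> words n" and i: "i < n"
  have "{a. a < 4 \<and> x[i := a] \<in> {x \<in> words n. g x \<in> C}} = {a. a < 4 \<and> g (x[i := a]) \<in> C}"
    using words_update[OF x] by auto
  then show "card {a. a < 4 \<and> x[i := a] \<in> {x \<in> words n. g x \<in> C}} = 2"
    using card_quasigroup_line_preimage[OF g x i C(2)] C(1) by simp
qed blast

lemma words_Suc_snocE:
  assumes "y \<in> words (Suc n)"
  obtains x t where "y = x @ [t]" "x \<in> words n" "t < 4"
proof -
  have "length y = Suc n" using length_words[OF assms] .
  then obtain x t where y: "y = x @ [t]" by (cases y rule: rev_exhaust) auto
  then show ?thesis using assms that unfolding words_def by auto
qed

lemma snoc_words: "x \<in> words n \<Longrightarrow> t < 4 \<Longrightarrow> x @ [t] \<in> words (Suc n)"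
  unfolding words_def by simp

lemma snoc_mem_iff: "x @ [t] \<in> {z @ [s] | z s. P z s} \<longleftrightarrow> P x t"
  by blast

lemma snoc_line_values:
  assumes "x \<in> words n" "i < Suc n"
  shows "{c. c < 4 \<and> (x @ [t])[i := c] \<in> {z @ [s] | z s. P z s}} =
    (if i < n then {c. c < 4 \<and> P (x[i := c]) t} else {c. c < 4 \<and> P x c})"
proof -
  have "(x @ [t])[i := c] = (if i < n then x[i := c] @ [t] else x @ [c])" for c
  proof (cases "i < n")
    case False
    then have "i = length x" using assms length_words[OF assms(1)] by simp
    moreover have "(x @ [t])[length x := c] = x @ [c]" by simp
    ultimately show ?thesis using False by simp
  qed (use length_words[OF assms(1)] in \<open>simp add: list_update_append1\<close>)
  then show ?thesis by (simp add: snoc_mem_iff)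
qed

lemma graph_MDS_code:
  assumes g: "quasigroup n g"
  shows "MDS_code (Suc n) {x @ [g x] | x. x \<in> words n}"
proof -
  have graph: "{x @ [g x] | x. x \<in> words n} = {z @ [s] | z s. z \<in> words n \<and> s = g z}" by auto
  show ?thesis
    unfolding MDS_code_iff graph
  proof (intro conjI ballI allI impI)
    fix y i assume y_words: "y \<in> words (Suc n)" and i: "i < Suc n"
    obtain x t where y: "y = x @ [t]" "x \<in> words n" "t < 4" by (rule words_Suc_snocE[OF y_words])
    show "card {c. c < 4 \<and> y[i := c] \<in> {z @ [s] | z s. z \<in> words n \<and> s = g z}} = 1"
    proof (cases "i < n")
      case True
      have "{c. c < 4 \<and> y[i := c] \<in> {z @ [s] | z s. z \<in> words n \<and> s = g z}} =
          {c. c < 4 \<and> g (x[i := c]) \<in> {t}}"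
        unfolding y(1) snoc_line_values[OF y(2) i] using True words_update[OF y(2)] by auto
      then show ?thesis using card_quasigroup_line_preimage[OF g y(2) True, of "{t}"] y(3) by simp
    next
      case False
      then have "{c. c < 4 \<and> y[i := c] \<in> {z @ [s] | z s. z \<in> words n \<and> s = g z}} = {g x}"
        unfolding y(1) snoc_line_values[OF y(2) i] using quasigroup_less4[OF g y(2)] y(2) by auto
      then show ?thesis by simp
    qed
  qed (use snoc_words quasigroup_less4[OF g] in blast)
qed

lemma double_MDS_code_snoc:
  assumes S: "double_MDS_code n S" and C: "card C = 2" "C \<subseteq> {..<4}"
  shows "double_MDS_code (Suc n) {x @ [t] | x t. x \<in> words n \<and> t < 4 \<and> (x \<in> S \<longleftrightarrow> t \<in> C)}"
  unfolding double_MDS_code_iff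
proof (intro conjI ballI allI impI)
  fix y i assume y_words: "y \<in> words (Suc n)" and i: "i < Suc n"
  obtain x t where y: "y = x @ [t]" "x \<in> words n" "t < 4" by (rule words_Suc_snocE[OF y_words])
  have card2: "card {c. c < (4::nat) \<and> (P c \<longleftrightarrow> e)} = 2" if "card {c. c < 4 \<and> P c} = 2" for P e
    using that card_complement_less4[of P] by (cases e) simp_all
  let ?D = "{x @ [t] | x t. x \<in> words n \<and> t < 4 \<and> (x \<in> S \<longleftrightarrow> t \<in> C)}"
  show "card {c. c < 4 \<and> y[i := c] \<in> ?D} = 2"
  proof (cases "i < n")
    case True
    then have "card {c. c < 4 \<and> x[i := c] \<in> S} = 2"
      using S y(2) unfolding double_MDS_code_iff by blast
    moreover have "{c. c < 4 \<and> y[i := c] \<in> ?D} = {c. c < 4 \<and> (x[i := c] \<in> S \<longleftrightarrow> t \<in> C)}"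
      unfolding y(1) snoc_line_values[OF y(2) i] using True y(3) words_update[OF y(2)] by auto
    ultimately show ?thesis using card2 by simp
  next
    case False
    have "card {c. c < 4 \<and> c \<in> C} = 2" using C by (simp add: Int_absorb1 Collect_conj_eq lessThan_def)
    moreover have "{c. c < 4 \<and> y[i := c] \<in> ?D} = {c. c < 4 \<and> (c \<in> C \<longleftrightarrow> x \<in> S)}"
      unfolding y(1) snoc_line_values[OF y(2) i] using False y(2) by auto
    ultimately show ?thesis using card2 by simp
  qed
qed (auto simp: words_def)

lemma card_Collect_less_Suc:
  "card {i. i < Suc n \<and> P i} = card {i. i < n \<and> P i} + (if P n then 1 else 0)"
proof (cases "P n")
  case True
  then have "{i. i < Suc n \<and> P i} = insert n {i. i < n \<and> P i}" by (auto simp: less_Suc_eq)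
  then show ?thesis using True by simp
next
  case False
  then have "{i. i < Suc n \<and> P i} = {i. i < n \<and> P i}" by (auto simp: less_Suc_eq)
  then show ?thesis using False by simp
qed

lemma semilinear_if_parity_preimage:
  fixes \<sigma> :: nat
  assumes g: "quasigroup n g" and C: "card C = 2" "C \<subseteq> {..<4}"
    and parity: "\<And>x. x \<in> words n \<Longrightarrow> g x \<in> C \<longleftrightarrow> odd (card {i. i < n \<and> \<psi> i (x ! i)} + \<sigma>)"
  shows "semilinear n g"
proof -
  define D where "D = {x @ [t] | x t. x \<in> words n \<and> t < 4 \<and> (x \<in> {x \<in> words n. g x \<in> C} \<longleftrightarrow> t \<in> C)}"
  \<comment> \<open>the last coordinate also absorbs the constant \<sigma>\<close>
  define \<chi> where "\<chi> i v = (if i < n then \<psi> i v else odd (\<sigma> + (if v \<in> C then 0 else 1)))" for i v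
  have "double_MDS_code (Suc n) D"
    unfolding D_def by (rule double_MDS_code_snoc[OF double_MDS_code_quasigroup_preimage[OF g C] C])
  moreover have "y \<in> D \<longleftrightarrow> odd (card {i. i < Suc n \<and> \<chi> i (y ! i)})"
    if y_words: "y \<in> words (Suc n)" for y
  proof -
    obtain x t where y: "y = x @ [t]" "x \<in> words n" "t < 4" by (rule words_Suc_snocE[OF y_words])
    have "{i. i < n \<and> \<chi> i (y ! i)} = {i. i < n \<and> \<psi> i (x ! i)}"
      using length_words[OF y(2)] unfolding y(1) \<chi>_def by (auto simp: nth_append)
    moreover have "y ! n = t" using length_words[OF y(2)] unfolding y(1) by (simp add: nth_append)
    moreover have "y \<in> D \<longleftrightarrow> (g x \<in> C \<longleftrightarrow> t \<in> C)" unfolding D_def y(1) using y by auto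
    ultimately show ?thesis
      using parity[OF y(2)] unfolding card_Collect_less_Suc \<chi>_def by auto
  qed
  moreover have "{x @ [g x] | x. x \<in> words n} \<subseteq> D"
    unfolding D_def using quasigroup_less4[OF g] by blast
  ultimately show ?thesis
    using graph_MDS_code[OF g] unfolding semilinear_def semilinear_code_def linear_double_MDS_def
    by auto
qed

lemma sum_indicator_lessThan:
  fixes n :: nat
  shows "(\<Sum>i<n. if P i then 1 else 0) = card {i. i < n \<and> P i}"
  by (induction n) (simp_all add: card_Collect_less_Suc)

lemma index_partition_singletons_sum:
  assumes K: "index_partition n n K"
  obtains \<psi> where "\<And>x. length x = n \<Longrightarrow>
    (\<Sum>j<n. if nths x (K j) \<in> SS j then 1 else 0) = card {i. i < n \<and> \<psi> i (x ! i)}"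
proof -
  obtain \<pi> where \<pi>: "bij_betw \<pi> {..<n} {..<n}" "\<And>j. j < n \<Longrightarrow> K j = {\<pi> j}"
    using index_partition_singletons[OF K] by blast
  have \<pi>_less: "\<pi> j < n" if "j < n" for j using bij_betw_apply[OF \<pi>(1)] that by blast
  define \<psi> where "\<psi> i v = ([v] \<in> SS (inv_into {..<n} \<pi> i))" for i v
  have "(\<Sum>j<n. if nths x (K j) \<in> SS j then 1 else 0) = card {i. i < n \<and> \<psi> i (x ! i)}"
    if x: "length x = n" for x
  proof -
    have "(\<Sum>j<n. if nths x (K j) \<in> SS j then 1 else 0) =
        (\<Sum>j<n. if \<psi> (\<pi> j) (x ! \<pi> j) then 1 else (0::nat))"
      using \<pi> \<pi>_less x unfolding \<psi>_def bij_betw_def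
      by (intro sum.cong) (auto simp: nths_singleton_nth)
    also have "\<dots> = (\<Sum>i<n. if \<psi> i (x ! i) then 1 else 0)"
      by (rule sum.reindex_bij_betw[OF \<pi>(1)])
    finally show ?thesis by (simp add: sum_indicator_lessThan)
  qed
  then show ?thesis by (rule that)
qed


lemma canonical_first_param_parity:
  assumes "canonical_first_param n S k"
  obtains K SS and \<sigma>0 :: nat where "index_partition n k K"
    "\<And>j. j < k \<Longrightarrow> prime_code (card (K j)) (SS j) \<and> double_MDS_code (card (K j)) (SS j)"
    "\<And>x. x \<in> words n \<Longrightarrow> x \<in> S \<longleftrightarrow> odd ((\<Sum>j<k. if nths x (K j) \<in> SS j then 1 else 0) + \<sigma>0)"
proof -
  obtain K SS and \<sigma>0 :: nat where K: "index_partition n k K"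
    "\<And>j. j < k \<Longrightarrow> prime_code (card (K j)) (SS j) \<and> double_MDS_code (card (K j)) (SS j)"
    and eq: "\<And>x. x \<in> words n \<Longrightarrow> (if x \<in> S then 1 else 0) =
      ((\<Sum>j<k. if nths x (K j) \<in> SS j then 1 else 0) + \<sigma>0) mod (2::nat)"
    using assms unfolding canonical_first_param_def by blast
  have "x \<in> S \<longleftrightarrow> odd ((\<Sum>j<k. if nths x (K j) \<in> SS j then 1 else 0) + \<sigma>0)" if "x \<in> words n" for x
    using eq[OF that] by (cases "x \<in> S") (simp_all add: odd_iff_mod_2_eq_one even_iff_mod_2_eq_zero)
  then show ?thesis using K by (intro that)
qed

lemma parity_put_nths_block:
  fixes \<sigma>0 :: nat
  assumes K: "index_partition n k K" "j0 < k"
    and X: "X \<in> words n" and z: "z \<in> words (card (K j0))"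
  shows "odd ((\<Sum>j<k. if nths (put_nths X (K j0) z) (K j) \<in> SS j then 1 else 0) + \<sigma>0) \<longleftrightarrow>
    (z \<in> SS j0 \<longleftrightarrow> even ((\<Sum>j\<in>{..<k} - {j0}. if nths X (K j) \<in> SS j then 1 else 0) + \<sigma>0))"
proof -
  let ?x = "put_nths X (K j0) z"
  have "length z = length (positions (K j0) (length X))"
    using length_words[OF X] length_words[OF z] length_positions[OF index_partition_subset[OF K]]
    by simp
  then have "nths ?x (K j0) = z" by (rule nths_put_nths)
  moreover have "(\<Sum>j\<in>{..<k} - {j0}. if nths ?x (K j) \<in> SS j then 1 else 0) =
      (\<Sum>j\<in>{..<k} - {j0}. if nths X (K j) \<in> SS j then 1 else (0::nat))"
    using index_partition_disjoint[OF K(1) _ K(2)] by (intro sum.cong) (auto simp: nths_put_nths_disjoint)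
  moreover have "(\<Sum>j<k. if nths ?x (K j) \<in> SS j then 1 else 0) =
      (if nths ?x (K j0) \<in> SS j0 then 1 else 0) +
      (\<Sum>j\<in>{..<k} - {j0}. if nths ?x (K j) \<in> SS j then 1 else (0::nat))"
    using K(2) by (simp add: sum.remove)
  ultimately have "(\<Sum>j<k. if nths ?x (K j) \<in> SS j then 1 else 0) + \<sigma>0 =
      (if z \<in> SS j0 then 1 else 0) + ((\<Sum>j\<in>{..<k} - {j0}. if nths X (K j) \<in> SS j then 1 else 0) + \<sigma>0)"
    by (simp only: add.assoc)
  then show ?thesis by auto
qed

lemma canonical_block_kernel_independent:
  fixes \<sigma>0 :: nat
  assumes g: "quasigroup n g" and C: "card C = 2" "C \<subseteq> {..<4}"
    and K: "index_partition n k K" "j0 < k"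
    and \<phi>: "double_MDS_code (card (K j0)) (SS j0)" "prime_code (card (K j0)) (SS j0)"
    and parity: "\<And>x. x \<in> words n \<Longrightarrow>
      g x \<in> C \<longleftrightarrow> odd ((\<Sum>j<k. if nths x (K j) \<in> SS j then 1 else 0) + \<sigma>0)"
    and x: "x \<in> words n" "x' \<in> words n"
    and y: "y \<in> words (card (K j0))" "y' \<in> words (card (K j0))"
  shows "g (put_nths x (K j0) y) = g (put_nths x (K j0) y') \<longleftrightarrow>
    g (put_nths x' (K j0) y) = g (put_nths x' (K j0) y')"
proof -
  have K0: "K j0 \<subseteq> {..<n}" using index_partition_subset[OF K] .
  have pre: "g (put_nths X (K j0) z) \<in> C \<longleftrightarrow>
      (z \<in> SS j0 \<longleftrightarrow> even ((\<Sum>j\<in>{..<k} - {j0}. if nths X (K j) \<in> SS j then 1 else 0) + \<sigma>0))"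
    if "X \<in> words n" "z \<in> words (card (K j0))" for X z
    using parity[OF put_nths_words[OF that K0]] parity_put_nths_block[OF K that] by simp
  show ?thesis
    using quasigroup_kernels_eq[OF quasigroup_put_nths[OF g x(1) K0] quasigroup_put_nths[OF g x(2) K0]
        _ \<phi>(1) prime_code_imp_indecomposable[OF \<phi>(2)] C pre[OF x(1)] pre[OF x(2)] y]
      index_partition_card_pos[OF K] by blast
qed


lemma reducible_if_canonical:
  fixes \<sigma>0 :: nat
  assumes g: "quasigroup n g" and C: "card C = 2" "C \<subseteq> {..<4}"
    and K: "index_partition n k K" "1 < k" "k < n"
    and blocks: "\<And>j. j < k \<Longrightarrow> prime_code (card (K j)) (SS j) \<and> double_MDS_code (card (K j)) (SS j)"
    and parity: "\<And>x. x \<in> words n \<Longrightarrow>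
      g x \<in> C \<longleftrightarrow> odd ((\<Sum>j<k. if nths x (K j) \<in> SS j then 1 else 0) + \<sigma>0)"
  shows "reducible n g"
proof -
  obtain j0 where j0: "j0 < k" "2 \<le> card (K j0)" using index_partition_large_block[OF K(1,3)] by blast
  have "K j0 \<noteq> {}" using index_partition_card_pos[OF K(1) j0(1)] by auto
  with blocks[OF j0(1)] interpret separable_block n g "K j0"
    by (intro separable_block.intro[OF g index_partition_subset[OF K(1) j0(1)]]
        canonical_block_kernel_independent[OF g C K(1) j0(1) _ _ parity]) auto
  show ?thesis by (rule reducible[OF j0(2) index_partition_card_less[OF K(1,2) j0(1)]])
qed

lemma semilinear_if_canonical:
  fixes \<sigma>0 :: nat
  assumes g: "quasigroup n g" and C: "card C = 2" "C \<subseteq> {..<4}"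
    and K: "index_partition n n K"
    and parity: "\<And>x. x \<in> words n \<Longrightarrow>
      g x \<in> C \<longleftrightarrow> odd ((\<Sum>j<n. if nths x (K j) \<in> SS j then 1 else 0) + \<sigma>0)"
  shows "semilinear n g"
proof -
  obtain \<psi> where \<psi>: "\<And>x. length x = n \<Longrightarrow>
      (\<Sum>j<n. if nths x (K j) \<in> SS j then 1 else 0) = card {i. i < n \<and> \<psi> i (x ! i)}"
    using index_partition_singletons_sum[OF K] by blast
  have "g x \<in> C \<longleftrightarrow> odd (card {i. i < n \<and> \<psi> i (x ! i)} + \<sigma>0)" if "x \<in> words n" for x
    using parity[OF that] \<psi>[OF length_words[OF that]] by simp
  then show ?thesis by (rule semilinear_if_parity_preimage[OF g C])
qed

theorem corollary6:
  fixes g :: "nat list \<Rightarrow> nat" and n k a b :: nat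
  assumes "quasigroup n g"
    and "a < 4" and "b < 4" and "a \<noteq> b"
    and "canonical_first_param n {x \<in> words n. g x \<in> {a, b}} k"
  shows "(1 < k \<and> k < n \<longrightarrow> reducible n g) \<and> (k = n \<longrightarrow> semilinear n g)"
proof -
  have C: "card {a, b} = 2" "{a, b} \<subseteq> {..<4}" using assms(2-4) by auto
  obtain K SS and \<sigma>0 :: nat where K: "index_partition n k K"
    and blocks: "\<And>j. j < k \<Longrightarrow> prime_code (card (K j)) (SS j) \<and> double_MDS_code (card (K j)) (SS j)"
    and parity_S: "\<And>x. x \<in> words n \<Longrightarrow> x \<in> {x \<in> words n. g x \<in> {a, b}} \<longleftrightarrow>
      odd ((\<Sum>j<k. if nths x (K j) \<in> SS j then 1 else 0) + \<sigma>0)"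
    using canonical_first_param_parity[OF assms(5)] by blast
  have parity: "g x \<in> {a, b} \<longleftrightarrow> odd ((\<Sum>j<k. if nths x (K j) \<in> SS j then 1 else 0) + \<sigma>0)"
    if "x \<in> words n" for x
    using parity_S[OF that] that by simp
  show ?thesis
    using reducible_if_canonical[OF assms(1) C K _ _ blocks parity]
      semilinear_if_canonical[OF assms(1) C, of K SS \<sigma>0] K parity by blast
qed

end
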